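(* Let $(X,\|\cdot\|_X)\subset(Y,\|\cdot\|_Y)$ be normed spaces, $\theta\ge0$, $m\in\mathbb N_*$, $d\in\mathbb N_*$, $e\in\mathcal E$, and let $y\in Y$ satisfy: there exists $a>1$ such that $$\limsup_{R\to\infty}\frac{L_a(R)^{1+\frac{\theta}{2m}}}{R}\,\beta_e\big(L_a(R)^{d/2m}\big)\,d_Y(y,B_X(R))<\infty.$$ Then there exists a sequence $(x_n)_{n\ge1}\subset X$ such that $$\sum_{n=1}^\infty\Big(2^{n\theta}\beta_e(2^{nd})\|y-x_n\|_Y+2^{-2nm}\|x_n\|_X\Big)<\infty.$$
   Context: Young function: $e:\mathbb R\to\mathbb R_+$ symmetric, strictly convex, $e(0)=0$. $\mathcal E$: Young functions with $e(2s)\le\lambda e(s)$ for some $\lambda>0$ and $s\mapsto e(s)/s$ nondecreasing on $(0,\infty)$. $e^{-1}(a)=\sup\{c:e(c)\le a\}$, $\beta_e(R)=R/e^{-1}(R)$. $L_a(R)=R(\ln R)^a$. $B_X(R)=\{x\in X:\|x\|_X\le R\}$, $d_Y(y,A)=\inf_{x\in A}\|y-x\|_Y$. *)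

theory Defs
  imports "HOL-Analysis.Analysis"
begin

definition young_function :: "(real \<Rightarrow> real) \<Rightarrow> bool" where
  "young_function e \<longleftrightarrow>
     (\<forall>s. e (-s) = e s) \<and> (\<forall>s. 0 \<le> e s) \<and> e 0 = 0 \<and>
     (\<forall>x y t. x \<noteq> y \<and> 0 < t \<and> t < 1 \<longrightarrow>
        e (t * x + (1 - t) * y) < t * e x + (1 - t) * e y)"

definition class_E :: "(real \<Rightarrow> real) \<Rightarrow> bool" where
  "class_E e \<longleftrightarrow> young_function e \<and>
     (\<exists>lam>0. \<forall>s. e (2 * s) \<le> lam * e s) \<and>
     (\<forall>s t. 0 < s \<and> s \<le> t \<longrightarrow> e s / s \<le> e t / t)"

definition young_inv :: "(real \<Rightarrow> real) \<Rightarrow> real \<Rightarrow> real" where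
  "young_inv e a = Sup {c. e c \<le> a}"

definition beta_e :: "(real \<Rightarrow> real) \<Rightarrow> real \<Rightarrow> real" where
  "beta_e e R = R / young_inv e R"

definition L_fun :: "real \<Rightarrow> real \<Rightarrow> real" where
  "L_fun a R = R * (ln R) powr a"

text \<open>X is a linear subspace S of the normed space Y carrying its own norm nX.\<close>
definition normed_subspace :: "'y::real_normed_vector set \<Rightarrow> ('y \<Rightarrow> real) \<Rightarrow> bool" where
  "normed_subspace S nX \<longleftrightarrow> subspace S \<and>
     (\<forall>x\<in>S. 0 \<le> nX x) \<and> (\<forall>x\<in>S. nX x = 0 \<longleftrightarrow> x = 0) \<and>
     (\<forall>x\<in>S. \<forall>c. nX (c *\<^sub>R x) = \<bar>c\<bar> * nX x) \<and>
     (\<forall>x\<in>S. \<forall>z\<in>S. nX (x + z) \<le> nX x + nX z)"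

definition ballX :: "'y set \<Rightarrow> ('y \<Rightarrow> real) \<Rightarrow> real \<Rightarrow> 'y set" where
  "ballX S nX R = {x\<in>S. nX x \<le> R}"

definition distY :: "'y::real_normed_vector \<Rightarrow> 'y set \<Rightarrow> real" where
  "distY y A = Inf {norm (y - x) | x. x \<in> A}"

end

theory Submission
  imports Defs
begin

(* Write g(R) for the gauge L_a(R)^(1+theta/2m)/R * beta_e(L_a(R)^(d/2m)), so the
   hypothesis gives constants C, R0 with g(R) * d_Y(y, B_X(R)) <= C for all R >= R0.  For every
   level k we choose the radius R_k with L_a(R_k) = 2^(2km); this is possible because L_a is
   continuous and unbounded.  At this radius the gauge factorises as g(R_k) = (ln R_k)^a * w_k,
   where w_k = 2^(k theta) beta_e(2^(kd)) is exactly the weight in the conclusion.  Picking x_k in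
   B_X(R_k) almost realising the distance gives
     w_k ||y - x_k||_Y + 2^(-2km) ||x_k||_X <= (C + 1) / (ln R_k)^a + 2^(-k),
   and since L_a(R_k) <= R_k^(1+a) we have ln R_k >= k ln 2 / (1 + a).  The right-hand side is
   therefore O(k^(-a)) + 2^(-k), which is summable because a > 1.
   The file first collects elementary facts on L_a, limsups, Young functions and distances,
   then proves the estimate for a single level, then the summability, and finally the theorem. *)

(* All radii in the argument are at least e, so that ln R >= 1. *)
lemma exp_one_le_imp_gt_one: "exp 1 \<le> (x::real) \<Longrightarrow> 1 < x"
  using one_less_exp_iff[of "1::real"] by linarith

lemma one_le_ln_powr:
  fixes R a :: real
  assumes "exp 1 \<le> R" "0 \<le> a"
  shows "1 \<le> ln R powr a"
proof -
  have "0 < R" using exp_one_le_imp_gt_one[OF assms(1)] by linarith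
  then have "ln (exp 1) \<le> ln R" using assms(1) by (subst ln_le_cancel_iff) auto
  then show ?thesis using assms(2) by (intro ge_one_powr_ge_zero) auto
qed

lemma L_fun_reaches:
  fixes a R1 T :: real
  assumes "0 \<le> a" "exp 1 \<le> R1" "L_fun a R1 \<le> T"
  shows "\<exists>R\<ge>R1. L_fun a R = T"
proof -
  have pos: "0 < R1" using exp_one_le_imp_gt_one[OF assms(2)] by linarith
  have "R1 \<le> L_fun a R1"
    using one_le_ln_powr[OF assms(2,1)] pos mult_left_mono[of 1 _ R1] by (simp add: L_fun_def)
  then have R1T: "R1 \<le> T" using assms(3) by linarith
  then have "T \<le> L_fun a T"
    using one_le_ln_powr[OF _ assms(1), of T] assms(2) pos mult_left_mono[of 1 _ T]
    by (simp add: L_fun_def)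
  moreover have "continuous_on {R1..T} (L_fun a)"
  proof -
    have "\<forall>x\<in>{R1..T}. 0 < x \<and> 0 < ln x"
      using exp_one_le_imp_gt_one[OF assms(2)] by (auto intro!: ln_gt_zero)
    then show ?thesis unfolding L_fun_def
      by (intro continuous_on_mult continuous_on_id continuous_on_powr
          continuous_on_ln continuous_on_const) auto
  qed
  ultimately obtain R where "R \<in> {R1..T}" "L_fun a R = T"
    using IVT'[of "L_fun a" R1 T T] assms(3) R1T by auto
  then show ?thesis by auto
qed

lemma eventually_le_of_Limsup:
  fixes f :: "real \<Rightarrow> real"
  assumes "Limsup at_top (\<lambda>R. ereal (f R)) < \<infinity>"
  obtains C R0 where "\<And>R. R0 \<le> R \<Longrightarrow> f R \<le> C"
proof -
  obtain C where "Limsup at_top (\<lambda>R. ereal (f R)) < ereal C"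
    using ereal_dense2[OF assms] by blast
  then have "eventually (\<lambda>R. ereal (f R) < ereal C) at_top" by (rule Limsup_lessD)
  then obtain R0 where "\<And>R. R0 \<le> R \<Longrightarrow> f R < C" by (auto simp: eventually_at_top_linorder)
  then show ?thesis using that[of R0 C] by force
qed

(* For e in the class E, {c. e c <= R} is bounded above (slopes e(c)/c are nondecreasing and
   e(1) > 0 by strict convexity) and contains 0, so its supremum is nonnegative. *)
lemma young_inv_nonneg:
  assumes "class_E e" "0 \<le> R"
  shows "0 \<le> young_inv e R"
proof -
  have yf: "young_function e"
    and slope_mono: "\<And>s t. 0 < s \<Longrightarrow> s \<le> t \<Longrightarrow> e s / s \<le> e t / t"
    using assms(1) unfolding class_E_def by auto
  have e0: "e 0 = 0" and sym: "e (-1) = e 1" using yf unfolding young_function_def by auto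
  have "e ((1/2) * 1 + (1 - 1/2) * (-1)) < (1/2) * e 1 + (1 - 1/2) * e (-1)"
    using yf unfolding young_function_def by (metis one_neq_neg_one field_sum_of_halves
        half_gt_zero_iff zero_less_one less_add_same_cancel1)
  then have e1: "0 < e 1" using e0 sym by simp
  have bounded: "c \<le> max 1 (R / e 1)" if "e c \<le> R" for c
  proof (cases "c \<le> 1")
    case False
    then have "e 1 \<le> e c / c" using slope_mono[of 1 c] by auto
    then have "c * e 1 \<le> R" using False that by (simp add: field_simps)
    then have "c \<le> R / e 1" using e1 by (simp add: field_simps)
    then show ?thesis by simp
  qed simp
  have "bdd_above {c. e c \<le> R}" unfolding bdd_above_def using bounded by blast
  moreover have "0 \<in> {c. e c \<le> R}" using e0 assms(2) by simp
  ultimately show ?thesis unfolding young_inv_def by (meson cSup_upper)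
qed

lemma beta_e_nonneg: "class_E e \<Longrightarrow> 0 \<le> R \<Longrightarrow> 0 \<le> beta_e e R"
  unfolding beta_e_def using young_inv_nonneg by simp

lemma normed_subspace_zero:
  assumes "normed_subspace S nX"
  shows "0 \<in> S" "nX 0 = 0"
proof -
  show "0 \<in> S" using assms unfolding normed_subspace_def subspace_def by auto
  then show "nX 0 = 0" using assms unfolding normed_subspace_def
    by (metis mult_zero_left abs_zero scaleR_zero_left)
qed

lemma distY_ball:
  assumes "normed_subspace S nX" "0 \<le> R"
  shows "0 \<le> distY y (ballX S nX R)"
    and "0 < \<delta> \<Longrightarrow> \<exists>x\<in>ballX S nX R. norm (y - x) < distY y (ballX S nX R) + \<delta>"
proof -
  have "0 \<in> ballX S nX R" using normed_subspace_zero[OF assms(1)] assms(2) by (simp add: ballX_def)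
  then have ne: "{norm (y - x) | x. x \<in> ballX S nX R} \<noteq> {}" by auto
  show "0 \<le> distY y (ballX S nX R)" unfolding distY_def using ne by (auto intro: cInf_greatest)
  show "\<exists>x\<in>ballX S nX R. norm (y - x) < distY y (ballX S nX R) + \<delta>" if "0 < \<delta>"
    using cInf_lessD[OF ne, of "distY y (ballX S nX R) + \<delta>"] that unfolding distY_def by auto
qed

definition gauge :: "real \<Rightarrow> real \<Rightarrow> nat \<Rightarrow> nat \<Rightarrow> (real \<Rightarrow> real) \<Rightarrow> real \<Rightarrow> real" where
  "gauge a \<theta> m d e R = L_fun a R powr (1 + \<theta> / (2 * real m))
     / R * beta_e e (L_fun a R powr (real d / (2 * real m)))"

definition dyadic_weight :: "real \<Rightarrow> nat \<Rightarrow> (real \<Rightarrow> real) \<Rightarrow> nat \<Rightarrow> real" where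
  "dyadic_weight \<theta> d e k = 2 powr (real k * \<theta>) * beta_e e (2 powr real (k * d))"

definition level_term ::
  "real \<Rightarrow> nat \<Rightarrow> nat \<Rightarrow> (real \<Rightarrow> real) \<Rightarrow> 'y::real_normed_vector \<Rightarrow> ('y \<Rightarrow> real) \<Rightarrow> nat \<Rightarrow> 'y \<Rightarrow> real"
  where "level_term \<theta> m d e y nX k x =
    dyadic_weight \<theta> d e k * norm (y - x) + 2 powr (- real (2 * k * m)) * nX x"

lemma gauge_at_level:
  assumes "m \<ge> 1" "0 < R" "L_fun a R = 2 powr real (2 * k * m)"
  shows "gauge a \<theta> m d e R = ln R powr a * dyadic_weight \<theta> d e k"
proof -
  define T where "T = L_fun a R"
  have "T powr (1 + \<theta> / (2 * real m)) = T * T powr (\<theta> / (2 * real m))"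
    unfolding T_def assms(3) by (simp add: powr_add)
  also have "T powr (\<theta> / (2 * real m)) = 2 powr (real k * \<theta>)"
    unfolding T_def assms(3) using assms(1) by (simp add: powr_powr)
  finally have "T powr (1 + \<theta> / (2 * real m)) = T * 2 powr (real k * \<theta>)" .
  moreover have "T powr (real d / (2 * real m)) = 2 powr real (k * d)"
    unfolding T_def assms(3) using assms(1) by (simp add: powr_powr)
  moreover have "T / R = ln R powr a" unfolding T_def L_fun_def using assms(2) by simp
  ultimately have "gauge a \<theta> m d e R = T * dyadic_weight \<theta> d e k / R"
    unfolding gauge_def dyadic_weight_def T_def[symmetric] by (simp add: mult.assoc)
  then show ?thesis using \<open>T / R = ln R powr a\<close> by (metis times_divide_eq_left)
qed

(* Since L_a(R) <= R^(1+a), the level-k radius satisfies ln R >= k ln 2 / (1 + a). *)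
lemma ln_radius_lower_bound:
  assumes "exp 1 \<le> R" "0 < a" "m \<ge> 1" "L_fun a R = 2 powr real (2 * k * m)"
  shows "real k * ln 2 / (1 + a) \<le> ln R"
proof -
  have R: "0 < R" "0 < ln R" "1 \<le> R" using exp_one_le_imp_gt_one[OF assms(1)] by auto
  have "ln R \<le> R" using ln_le_minus_one[OF R(1)] by simp
  then have "ln R powr a \<le> R powr a" using R assms(2) by (intro powr_mono2) auto
  then have "L_fun a R \<le> R powr (1 + a)" unfolding L_fun_def using R by (simp add: powr_add)
  then have "ln (L_fun a R) \<le> ln (R powr (1 + a))"
    using assms(4) by (intro ln_mono) auto
  then have "ln (L_fun a R) \<le> (1 + a) * ln R" by simp
  moreover have "ln (L_fun a R) = real (2 * k * m) * ln 2" unfolding assms(4) by (simp add: ln_powr)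
  moreover have "real k * ln 2 \<le> real (2 * k * m) * ln 2"
  proof -
    have "k \<le> 2 * k * m" using assms(3) by simp
    then have "real k \<le> real (2 * k * m)" by (rule of_nat_mono)
    then show ?thesis by (rule mult_right_mono) simp
  qed
  ultimately show ?thesis using assms(2) by (simp add: field_simps)
qed

(* The summands are nonnegative, so only upper bounds are needed for the comparison test. *)
lemma level_term_nonneg:
  assumes "normed_subspace S nX" "class_E e" "x \<in> S"
  shows "0 \<le> level_term \<theta> m d e y nX k x"
  using assms beta_e_nonneg[OF assms(2)]
  unfolding level_term_def dyadic_weight_def normed_subspace_def by simp

lemma dyadic_level_approximant:
  assumes S: "normed_subspace S nX" and e: "class_E e" and a: "1 < a" and m: "1 \<le> m" and k: "1 \<le> k"
    and R1: "exp 1 \<le> R1" and C: "\<And>R. R1 \<le> R \<Longrightarrow> gauge a \<theta> m d e R * distY y (ballX S nX R) \<le> C"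
    and level: "L_fun a R1 \<le> 2 powr real (2 * k * m)"
  shows "\<exists>x\<in>S. level_term \<theta> m d e y nX k x
           \<le> (\<bar>C\<bar> + 1) * (ln 2 / (1 + a)) powr (-a) * real k powr (-a) + 2 powr (- real k)"
proof -
  obtain R where "R1 \<le> R" and LR: "L_fun a R = 2 powr real (2 * k * m)"
    using L_fun_reaches[OF _ R1 level] a by auto
  then have R: "exp 1 \<le> R" using R1 by linarith
  have R0: "0 < R" using exp_one_le_imp_gt_one[OF R] by linarith
  define l where "l = ln R powr a"
  define w where "w = dyadic_weight \<theta> d e k"
  define D where "D = distY y (ballX S nX R)"
  have l1: "1 \<le> l" unfolding l_def using one_le_ln_powr[OF R] a by simp
  have w0: "0 \<le> w" unfolding w_def dyadic_weight_def using beta_e_nonneg[OF e] by simp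
  have "l * (w * D) \<le> C"
    using C[OF \<open>R1 \<le> R\<close>] gauge_at_level[OF m R0 LR] unfolding l_def w_def D_def by (simp add: mult.assoc)
  then have wD: "w * D \<le> C / l" using l1 by (simp add: pos_le_divide_eq mult.commute)
  define \<delta> where "\<delta> = 2 powr (- real k)"
  obtain x where x: "x \<in> ballX S nX R" and near: "norm (y - x) < D + \<delta> / (w + 1)"
    using distY_ball(2)[OF S, of R "\<delta> / (w + 1)" y] R0 w0 unfolding D_def \<delta>_def by auto
  have "w * norm (y - x) \<le> w * D + \<delta> * (w / (w + 1))"
    using mult_left_mono[OF less_imp_le[OF near] w0] by (simp add: distrib_left mult.commute)
  also have "\<dots> \<le> C / l + \<delta>"
    using wD w0 unfolding \<delta>_def by (intro add_mono mult_left_le) auto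
  finally have approx_error: "w * norm (y - x) \<le> C / l + \<delta>" .
  have "2 powr (- real (2 * k * m)) * nX x = nX x / (R * l)"
    using LR unfolding L_fun_def l_def by (simp add: powr_minus divide_inverse)
  also have "\<dots> \<le> R / (R * l)" using x R0 l1 by (intro divide_right_mono) (auto simp: ballX_def)
  finally have size: "2 powr (- real (2 * k * m)) * nX x \<le> 1 / l" using R0 by simp
  define c where "c = ln 2 / (1 + a)"
  have c: "0 < c" unfolding c_def using a by simp
  have "(real k * c) powr a \<le> l"
    using ln_radius_lower_bound[OF R _ m LR] a c k unfolding l_def c_def
    by (intro powr_mono2) auto
  moreover have "0 < (real k * c) powr a" using c k by simp
  ultimately have "1 / l \<le> 1 / (real k * c) powr a" by (intro frac_le) auto
  also have "\<dots> = c powr (-a) * real k powr (-a)" using c by (simp add: powr_minus powr_mult field_simps)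
  finally have "1 / l \<le> c powr (-a) * real k powr (-a)" .
  then have "(\<bar>C\<bar> + 1) * (1 / l) \<le> (\<bar>C\<bar> + 1) * (c powr (-a) * real k powr (-a))"
    by (rule mult_left_mono) simp
  then have "(\<bar>C\<bar> + 1) / l \<le> (\<bar>C\<bar> + 1) * c powr (-a) * real k powr (-a)"
    by (simp add: mult.assoc)
  moreover have "C / l + 1 / l \<le> (\<bar>C\<bar> + 1) / l"
    using l1 by (simp add: add_divide_distrib[symmetric] divide_right_mono)
  ultimately show ?thesis
    using x approx_error size unfolding level_term_def w_def[symmetric] c_def \<delta>_def ballX_def
    by (intro bexI[of _ x]) auto
qed

lemma summable_level_bound:
  assumes "1 < a"
  shows "summable (\<lambda>k::nat. B * real k powr (-a) + 2 powr (- real k))"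
proof (rule summable_add)
  show "summable (\<lambda>k::nat. B * real k powr (-a))"
    using assms by (intro summable_mult) (simp add: summable_real_powr_iff)
  have "(\<lambda>k::nat. 2 powr (- real k)) = (\<lambda>k. (1 / 2 :: real) ^ k)"
    by (simp add: powr_minus powr_realpow power_one_over inverse_eq_divide)
  then show "summable (\<lambda>k::nat. 2 powr (- real k))" by (simp add: summable_geometric)
qed

(* Every level k beyond L_a(R1) satisfies the hypothesis of the single-level estimate. *)
lemma nat_le_dyadic:
  assumes "1 \<le> m"
  shows "real k \<le> 2 powr real (2 * k * m)"
proof -
  have "real k < 2 ^ k" using less_exp[of k] by (metis of_nat_less_iff of_nat_numeral of_nat_power)
  also have "(2::real) ^ k \<le> 2 ^ (2 * k * m)" using assms by (intro power_increasing) auto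
  also have "\<dots> = 2 powr real (2 * k * m)" by (rule powr_realpow[symmetric]) simp
  finally show ?thesis by simp
qed

lemma dyadic_approximants:
  fixes S :: "'y::real_normed_vector set"
  assumes S: "normed_subspace S nX" and e: "class_E e" and a: "1 < a" and m: "1 \<le> m"
    and R1: "exp 1 \<le> R1" and C: "\<And>R. R1 \<le> R \<Longrightarrow> gauge a \<theta> m d e R * distY y (ballX S nX R) \<le> C"
  shows "\<exists>x. (\<forall>k. x k \<in> S) \<and> summable (\<lambda>n. level_term \<theta> m d e y nX (Suc n) (x (Suc n)))"
proof -
  define B where "B = (\<bar>C\<bar> + 1) * (ln 2 / (1 + a)) powr (-a)"
  define good where "good k x \<longleftrightarrow> x \<in> S \<and> (1 \<le> k \<and> L_fun a R1 \<le> 2 powr real (2 * k * m)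
          \<longrightarrow> level_term \<theta> m d e y nX k x \<le> B * real k powr (-a) + 2 powr (- real k))" for k x
  have "\<exists>x. good k x" for k
  proof (cases "1 \<le> k \<and> L_fun a R1 \<le> 2 powr real (2 * k * m)")
    case True
    then show ?thesis
      using dyadic_level_approximant[OF S e a m _ R1 C, of k] unfolding good_def B_def by blast
  qed (use normed_subspace_zero(1)[OF S] in \<open>auto simp: good_def\<close>)
  then obtain x where x: "\<And>k. good k (x k)" by metis
  then have xS: "\<And>k. x k \<in> S" unfolding good_def by blast
  have "summable (\<lambda>n. level_term \<theta> m d e y nX (Suc n) (x (Suc n)))"
  proof (rule summable_comparison_test')
    show "summable (\<lambda>n. B * real (Suc n) powr (-a) + 2 powr (- real (Suc n)))"
      using summable_level_bound[OF a] by (subst summable_Suc_iff)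
    fix n assume "nat \<lceil>L_fun a R1\<rceil> \<le> n"
    then have "L_fun a R1 \<le> 2 powr real (2 * Suc n * m)"
      using nat_le_dyadic[OF m, of "Suc n"] by linarith
    then show "norm (level_term \<theta> m d e y nX (Suc n) (x (Suc n)))
               \<le> B * real (Suc n) powr (-a) + 2 powr (- real (Suc n))"
      using x[of "Suc n"] level_term_nonneg[OF S e xS] unfolding good_def by simp
  qed
  with xS show ?thesis by blast
qed

theorem mainTheorem16:
  fixes S :: "'y::real_normed_vector set" and nX :: "'y \<Rightarrow> real"
    and \<theta> :: real and m d :: nat and e :: "real \<Rightarrow> real" and y :: 'y
  assumes "normed_subspace S nX"
    and "\<theta> \<ge> 0" and "m \<ge> 1" and "d \<ge> 1"
    and "class_E e"
    and "\<exists>a>1. Limsup at_top (\<lambda>R. ereal (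
            L_fun a R powr (1 + \<theta> / (2 * real m))
            / R * beta_e e (L_fun a R powr (real d / (2 * real m)))
            * distY y (ballX S nX R))) < \<infinity>"
  shows "\<exists>x :: nat \<Rightarrow> 'y. (\<forall>n\<ge>1. x n \<in> S) \<and>
           summable (\<lambda>n. 2 powr (real (Suc n) * \<theta>) * beta_e e (2 powr (real (Suc n * d)))
                          * norm (y - x (Suc n))
                        + 2 powr (- real (2 * Suc n * m)) * nX (x (Suc n)))"
proof -
  obtain a where a: "1 < a"
    and bounded: "Limsup at_top (\<lambda>R. ereal (gauge a \<theta> m d e R * distY y (ballX S nX R))) < \<infinity>"
    using assms(6) unfolding gauge_def by blast
  obtain C R0 where C: "\<And>R. R0 \<le> R \<Longrightarrow> gauge a \<theta> m d e R * distY y (ballX S nX R) \<le> C"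
    using eventually_le_of_Limsup[OF bounded] by blast
  have "exp 1 \<le> max R0 (exp 1)" by simp
  moreover have "\<And>R. max R0 (exp 1) \<le> R \<Longrightarrow> gauge a \<theta> m d e R * distY y (ballX S nX R) \<le> C"
    using C by simp
  ultimately obtain x where "\<forall>k. x k \<in> S"
    and "summable (\<lambda>n. level_term \<theta> m d e y nX (Suc n) (x (Suc n)))"
    using dyadic_approximants[OF assms(1,5) a assms(3)] by blast
  then show ?thesis unfolding level_term_def dyadic_weight_def by blast
qed

end
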